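(* Let $\gamma\geq0$ and $G=(V,E,\omega)\in\mathcal C_\gamma$. Let $S\subset V$ be nonempty and define $\tau_\kappa(S):=\frac12\|L\chi_S\|_{\mathcal V,\infty}^{-1}$. Let $\tau\geq0$ and let $S^1:=\{i\in V:(e^{-\tau L}\chi_S)_i\geq\frac12\}$ be the first set in the OKMBO evolution of $S^0=S$. If $0\leq\tau<\tau_\kappa(S)$, then $S^1=S$.
   Context: $\mathcal{G}$ is the set of finite, simple, connected, undirected, edge-weighted graphs $G=(V,E,\omega)$ with $V=\{1,\dots,n\}$, $n\geq2$, weights $\omega_{ij}=\omega_{ji}>0$ on edges, $0$ otherwise. $d_i=\sum_j\omega_{ij}$. $\mathcal V$: functions $V\to\mathbb R$; $\|u\|_{\mathcal V,\infty}=\max_i|u_i|$; $\chi_S$ indicator of $S$. Fixed $r\in[0,1]$: $(\Delta u)_i=d_i^{-r}\sum_j\omega_{ij}(u_i-u_j)$, $\mathcal M(u)=\sum_id_i^ru_i$, $\mathrm{vol}(V)=\sum_id_i^r$, $\mathcal A(u)=\frac{\mathcal M(u)}{\mathrm{vol}(V)}\chi_V$. For $u\in\mathcal V$ let $\varphi$ be the unique solution of $\Delta\varphi=u-\mathcal A(u)$, $\mathcal M(\varphi)=0$, and $Lu:=\Delta u+\gamma\varphi$; $e^{-\tau L}$ is the operator exponential (so $e^{-\tau L}u_0$ is the value at time $\tau$ of the solution of $du/dt=-Lu$, $u(0)=u_0$). Equilibrium measure $\nu^S$ ($S\subsetneq V$): unique $\nu$ with $(\Delta\nu)_i=1$ on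 $S$, $\nu=0$ off $S$. $f^j:=\nu^{V\setminus\{j\}}-\mathcal A(\nu^{V\setminus\{j\}})$. $\mathcal C^0=\{G\in\mathcal G:\forall j\ \forall i\neq j:\ \omega_{ij}>0\text{ or }f^j_i\geq0\}$; for $\gamma>0$, $\mathcal C_\gamma=\{G\in\mathcal C^0:\forall j\ \forall i\neq j:\ \omega_{ij}=0\text{ or }d_i^{-r}\omega_{ij}+\gamma\frac{d_j^r}{\mathrm{vol}(V)}f^j_i>0\}$; $\mathcal C_0:=\mathcal G$. *)

theory Defs
  imports "HOL-Analysis.Analysis"
begin

text \<open>A graph on V = {1..n} is given by n and a weight function w; only the
values of w on V x V are relevant.  Functions on V are functions nat => real,
only their values on V are relevant.\<close>

definition Vset :: "nat \<Rightarrow> nat set" where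
  "Vset n = {1..n}"

definition is_graph :: "nat \<Rightarrow> (nat \<Rightarrow> nat \<Rightarrow> real) \<Rightarrow> bool" where
  "is_graph n w \<longleftrightarrow> n \<ge> 2 \<and>
     (\<forall>i\<in>Vset n. \<forall>j\<in>Vset n. w i j = w j i \<and> w i j \<ge> 0) \<and>
     (\<forall>i\<in>Vset n. w i i = 0) \<and>
     (\<forall>i\<in>Vset n. \<forall>j\<in>Vset n.
        (i, j) \<in> {(a, b). a \<in> Vset n \<and> b \<in> Vset n \<and> w a b > 0}\<^sup>*)"

definition deg :: "nat \<Rightarrow> (nat \<Rightarrow> nat \<Rightarrow> real) \<Rightarrow> nat \<Rightarrow> real" where
  "deg n w i = (\<Sum>j\<in>Vset n. w i j)"

definition Lap :: "nat \<Rightarrow> (nat \<Rightarrow> nat \<Rightarrow> real) \<Rightarrow> real \<Rightarrow> (nat \<Rightarrow> real) \<Rightarrow> nat \<Rightarrow> real" where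
  "Lap n w r u = (\<lambda>i. deg n w i powr (- r) * (\<Sum>j\<in>Vset n. w i j * (u i - u j)))"

definition mass :: "nat \<Rightarrow> (nat \<Rightarrow> nat \<Rightarrow> real) \<Rightarrow> real \<Rightarrow> (nat \<Rightarrow> real) \<Rightarrow> real" where
  "mass n w r u = (\<Sum>i\<in>Vset n. deg n w i powr r * u i)"

definition vol :: "nat \<Rightarrow> (nat \<Rightarrow> nat \<Rightarrow> real) \<Rightarrow> real \<Rightarrow> real" where
  "vol n w r = (\<Sum>i\<in>Vset n. deg n w i powr r)"

definition avg :: "nat \<Rightarrow> (nat \<Rightarrow> nat \<Rightarrow> real) \<Rightarrow> real \<Rightarrow> (nat \<Rightarrow> real) \<Rightarrow> nat \<Rightarrow> real" where
  "avg n w r u = (\<lambda>i. mass n w r u / vol n w r)"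

definition phi :: "nat \<Rightarrow> (nat \<Rightarrow> nat \<Rightarrow> real) \<Rightarrow> real \<Rightarrow> (nat \<Rightarrow> real) \<Rightarrow> nat \<Rightarrow> real" where
  "phi n w r u = (THE p. (\<forall>i\<in>Vset n. Lap n w r p i = u i - avg n w r u i) \<and>
                         mass n w r p = 0 \<and> (\<forall>i. i \<notin> Vset n \<longrightarrow> p i = 0))"

definition Lop :: "nat \<Rightarrow> (nat \<Rightarrow> nat \<Rightarrow> real) \<Rightarrow> real \<Rightarrow> real \<Rightarrow> (nat \<Rightarrow> real) \<Rightarrow> nat \<Rightarrow> real" where
  "Lop n w r \<gamma> u = (\<lambda>i. Lap n w r u i + \<gamma> * phi n w r u i)"

definition expL :: "nat \<Rightarrow> (nat \<Rightarrow> nat \<Rightarrow> real) \<Rightarrow> real \<Rightarrow> real \<Rightarrow> real \<Rightarrow> (nat \<Rightarrow> real) \<Rightarrow> nat \<Rightarrow> real" where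
  "expL n w r \<gamma> \<tau> u = (\<lambda>i. \<Sum>k. (- \<tau>) ^ k / fact k * (((Lop n w r \<gamma>) ^^ k) u) i)"

definition supnorm :: "nat \<Rightarrow> (nat \<Rightarrow> real) \<Rightarrow> real" where
  "supnorm n u = Max ((\<lambda>i. \<bar>u i\<bar>) ` Vset n)"

text \<open>Equilibrium measure nu^S (S a proper subset of V).\<close>
definition eqmeas :: "nat \<Rightarrow> (nat \<Rightarrow> nat \<Rightarrow> real) \<Rightarrow> real \<Rightarrow> nat set \<Rightarrow> nat \<Rightarrow> real" where
  "eqmeas n w r S = (THE \<nu>. (\<forall>i\<in>S. Lap n w r \<nu> i = 1) \<and> (\<forall>i. i \<notin> S \<longrightarrow> \<nu> i = 0))"

definition fj :: "nat \<Rightarrow> (nat \<Rightarrow> nat \<Rightarrow> real) \<Rightarrow> real \<Rightarrow> nat \<Rightarrow> nat \<Rightarrow> real" where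
  "fj n w r j = (\<lambda>i. eqmeas n w r (Vset n - {j}) i - avg n w r (eqmeas n w r (Vset n - {j})) i)"

definition in_C0 :: "nat \<Rightarrow> (nat \<Rightarrow> nat \<Rightarrow> real) \<Rightarrow> real \<Rightarrow> bool" where
  "in_C0 n w r \<longleftrightarrow> is_graph n w \<and>
     (\<forall>j\<in>Vset n. \<forall>i\<in>Vset n. i \<noteq> j \<longrightarrow> w i j > 0 \<or> fj n w r j i \<ge> 0)"

definition in_Cgamma :: "nat \<Rightarrow> (nat \<Rightarrow> nat \<Rightarrow> real) \<Rightarrow> real \<Rightarrow> real \<Rightarrow> bool" where
  "in_Cgamma n w r \<gamma> \<longleftrightarrow>
     (if \<gamma> = 0 then is_graph n w
      else in_C0 n w r \<and>
        (\<forall>j\<in>Vset n. \<forall>i\<in>Vset n. i \<noteq> j \<longrightarrow> w i j = 0 \<or>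
           deg n w i powr (- r) * w i j
             + \<gamma> * (deg n w j powr r / vol n w r) * fj n w r j i > 0))"

definition tau_kappa :: "nat \<Rightarrow> (nat \<Rightarrow> nat \<Rightarrow> real) \<Rightarrow> real \<Rightarrow> real \<Rightarrow> nat set \<Rightarrow> ereal" where
  "tau_kappa n w r \<gamma> S =
     (let N = supnorm n (Lop n w r \<gamma> (indicator S)) in
      if N = 0 then \<infinity> else ereal (1 / (2 * N)))"

definition okmbo_step :: "nat \<Rightarrow> (nat \<Rightarrow> nat \<Rightarrow> real) \<Rightarrow> real \<Rightarrow> real \<Rightarrow> real \<Rightarrow> nat set \<Rightarrow> nat set" where
  "okmbo_step n w r \<gamma> \<tau> S = {i\<in>Vset n. expL n w r \<gamma> \<tau> (indicator S) i \<ge> 1/2}"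

end

theory Submission
  imports Defs
begin

text \<open>Write \<open>e\<^sub>j\<close> for the indicator of vertex \<open>j\<close>. The equilibrium measure gives
  \<open>\<Delta> f\<^sup>j = 1 - vol(V) d\<^sub>j\<^sup>-\<^sup>r e\<^sub>j\<close> on \<open>V\<close>, and \<open>f\<^sup>j\<close> has mass zero, so the potential of
  \<open>e\<^sub>j\<close> is \<open>\<phi> = -(d\<^sub>j\<^sup>r / vol(V)) f\<^sup>j\<close>. Hence the off-diagonal entries of the matrix of \<open>L\<close>
  are \<open>-d\<^sub>i\<^sup>-\<^sup>r \<omega>\<^sub>i\<^sub>j - \<gamma> (d\<^sub>j\<^sup>r / vol(V)) f\<^sup>j\<^sub>i\<close>, which are nonpositive exactly by the
  definition of \<open>\<C>\<^sub>\<gamma>\<close>, and its rows sum to zero because \<open>L\<close> kills constants.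
  For such a matrix \<open>exp(-\<tau> L) = exp(-c \<tau>) exp(\<tau> B)\<close>, where \<open>B = c I - L\<close> is entrywise
  nonnegative with row sums \<open>c\<close>; comparing \<open>exp(\<tau> B) u\<close> termwise with \<open>exp(c \<tau>) u\<close> gives
  \<open>|exp(-\<tau> L) u - u| \<le> \<tau> \<parallel>L u\<parallel>\<^sub>\<infinity>\<close>. For \<open>u = \<chi>\<^sub>S\<close> and \<open>\<tau> < \<tau>\<^sub>\<kappa>(S)\<close> every entry of
  \<open>exp(-\<tau> L) \<chi>\<^sub>S\<close> is therefore within \<open>1/2\<close> of \<open>\<chi>\<^sub>S\<close>, so thresholding returns \<open>S\<close>.\<close>

section \<open>Uniformization of matrices with zero row sums\<close>

lemma exp_sums: "(\<lambda>k. x ^ k / fact k) sums exp (x::real)"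
  using exp_converges[of x] by (simp add: divide_inverse mult.commute)

lemma exp_deriv_sums:
  "(\<lambda>k. x ^ k / fact k * (real k * a ^ (k - 1))) sums (x * exp (a * x :: real))"
proof -
  have "(\<lambda>k. x * ((a * x) ^ k / fact k)) sums (x * exp (a * x))"
    by (rule sums_mult[OF exp_sums])
  moreover have "(\<lambda>k. x * ((a * x) ^ k / fact k))
      = (\<lambda>k. x ^ Suc k / fact (Suc k) * (real (Suc k) * a ^ (Suc k - 1)))"
    by (simp add: fun_eq_iff fact_Suc power_mult_distrib field_simps del: of_nat_Suc)
  ultimately have "(\<lambda>k. x ^ Suc k / fact (Suc k) * (real (Suc k) * a ^ (Suc k - 1))) sums (x * exp (a * x))"
    by simp
  then show ?thesis
    using sums_Suc_iff[of "\<lambda>k. x ^ k / fact k * (real k * a ^ (k - 1))"] by simp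
qed

lemma sum_binomial_Suc:
  fixes X :: "nat \<Rightarrow> 'a::comm_ring_1" and z :: 'a
  shows "(\<Sum>j\<le>k. of_nat (k choose j) * z ^ (k - j) * X (Suc j))
           + z * (\<Sum>j\<le>k. of_nat (k choose j) * z ^ (k - j) * X j)
         = (\<Sum>j\<le>Suc k. of_nat (Suc k choose j) * z ^ (Suc k - j) * X j)"
proof -
  have "(\<Sum>j\<le>Suc k. of_nat (Suc k choose j) * z ^ (Suc k - j) * X j)
     = z ^ Suc k * X 0 + (\<Sum>j\<le>k. of_nat (k choose j) * z ^ (k - j) * X (Suc j))
        + (\<Sum>j\<le>k. of_nat (k choose Suc j) * z ^ (k - j) * X (Suc j))"
    by (subst sum.atMost_Suc_shift) (simp add: sum.distrib algebra_simps)
  moreover have "z * (\<Sum>j\<le>k. of_nat (k choose j) * z ^ (k - j) * X j)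
      = (\<Sum>j\<le>k. of_nat (k choose j) * z ^ (Suc k - j) * X j)"
    by (simp add: sum_distrib_left algebra_simps Suc_diff_le)
  moreover have "\<dots> = (\<Sum>j\<le>Suc k. of_nat (k choose j) * z ^ (Suc k - j) * X j)"
    by (simp add: binomial_eq_0)
  moreover have "\<dots> = z ^ Suc k * X 0 + (\<Sum>j\<le>k. of_nat (k choose Suc j) * z ^ (k - j) * X (Suc j))"
    by (subst sum.atMost_Suc_shift) simp
  ultimately show ?thesis
    by (simp add: algebra_simps)
qed

locale Z_matrix_zero_rows =
  fixes V :: "nat set" and m :: "nat \<Rightarrow> nat \<Rightarrow> real"
  assumes finite_V: "finite V"
    and offdiag_nonpos: "\<And>i j. i \<in> V \<Longrightarrow> j \<in> V \<Longrightarrow> i \<noteq> j \<Longrightarrow> m i j \<le> 0"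
    and row_sum_zero: "\<And>i. i \<in> V \<Longrightarrow> (\<Sum>j\<in>V. m i j) = 0"
begin

definition M :: "(nat \<Rightarrow> real) \<Rightarrow> nat \<Rightarrow> real" where
  "M x = (\<lambda>i. if i \<in> V then (\<Sum>j\<in>V. m i j * x j) else 0)"

text \<open>\<open>c\<close> dominates the diagonal, so \<open>B = c I - M\<close> is entrywise nonnegative on \<open>V\<close> with row sums \<open>c\<close>.\<close>

definition c :: real where
  "c = 1 + (\<Sum>i\<in>V. \<bar>m i i\<bar>)"

definition B :: "(nat \<Rightarrow> real) \<Rightarrow> nat \<Rightarrow> real" where
  "B x = (\<lambda>i. c * x i - M x i)"

lemma c_ge_1: "c \<ge> 1"
  unfolding c_def by (simp add: sum_nonneg)

lemma diag_le_c:
  assumes "i \<in> V"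
  shows "m i i \<le> c"
proof -
  have "\<bar>m i i\<bar> \<le> (\<Sum>i\<in>V. \<bar>m i i\<bar>)"
    by (rule member_le_sum) (use assms finite_V in auto)
  then show ?thesis
    unfolding c_def by linarith
qed

lemma B_abs_le:
  assumes x: "\<And>j. j \<in> V \<Longrightarrow> \<bar>x j\<bar> \<le> K" and i: "i \<in> V"
  shows "\<bar>B x i\<bar> \<le> c * K"
proof -
  define b where "b j = (if i = j then c else 0) - m i j" for j
  have b_nonneg: "b j \<ge> 0" if "j \<in> V" for j
    using offdiag_nonpos[OF i that] diag_le_c[OF i] by (cases "i = j") (auto simp: b_def)
  have "(\<Sum>j\<in>V. (if i = j then c else 0) * x j) = c * x i"
    using i finite_V by (simp add: if_distrib[of "\<lambda>a. a * x _"] cong: if_cong)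
  then have "B x i = (\<Sum>j\<in>V. b j * x j)"
    using i by (simp add: B_def M_def b_def algebra_simps sum_subtractf)
  also have "\<bar>\<dots>\<bar> \<le> (\<Sum>j\<in>V. b j * K)"
    using b_nonneg x by (intro order.trans[OF sum_abs] sum_mono) (simp add: abs_mult mult_left_mono)
  also have "\<dots> = c * K"
    using i finite_V row_sum_zero[OF i] by (simp add: b_def sum_subtractf flip: sum_distrib_right)
  finally show ?thesis .
qed

lemma M_scale: "M (\<lambda>l. a * x l) = (\<lambda>l. a * M x l)"
  by (simp add: M_def fun_eq_iff sum_distrib_left algebra_simps)

lemma M_sum: "M (\<lambda>l. \<Sum>j\<in>J. a j * f j l) = (\<lambda>l. \<Sum>j\<in>J. a j * M (f j) l)"
  by (simp add: M_def fun_eq_iff sum_distrib_left algebra_simps sum.swap[of _ V J])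

lemma B_diff: "B (\<lambda>l. a * x l - y l) = (\<lambda>l. a * B x l - B y l)"
  by (simp add: B_def M_def fun_eq_iff sum_distrib_left algebra_simps sum_subtractf)

lemma neg_M_power_binomial:
  "(\<lambda>i. (-1) ^ k * (M ^^ k) u i) = (\<lambda>i. \<Sum>j\<le>k. of_nat (k choose j) * (-c) ^ (k - j) * (B ^^ j) u i)"
proof (induction k)
  case 0
  then show ?case by simp
next
  case (Suc k)
  let ?a = "\<lambda>j. of_nat (k choose j) * (-c) ^ (k - j)"
  have "(\<lambda>i. (-1) ^ Suc k * (M ^^ Suc k) u i) = (\<lambda>i. - M (\<lambda>l. (-1) ^ k * (M ^^ k) u l) i)"
    by (simp add: M_scale)
  also have "\<dots> = (\<lambda>i. - M (\<lambda>l. \<Sum>j\<le>k. ?a j * (B ^^ j) u l) i)"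
    using Suc.IH by (simp add: mult.assoc)
  also have "\<dots> = (\<lambda>i. - (\<Sum>j\<le>k. ?a j * M ((B ^^ j) u) i))"
    by (simp only: M_sum)
  also have "\<dots> = (\<lambda>i. (\<Sum>j\<le>k. ?a j * (B ^^ Suc j) u i) + (-c) * (\<Sum>j\<le>k. ?a j * (B ^^ j) u i))"
    by (simp add: B_def fun_eq_iff sum_distrib_left algebra_simps sum_subtractf sum.distrib sum_negf)
  also have "\<dots> = (\<lambda>i. \<Sum>j\<le>Suc k. of_nat (Suc k choose j) * (-c) ^ (Suc k - j) * (B ^^ j) u i)"
    by (intro ext sum_binomial_Suc)
  finally show ?case .
qed

lemma B_power_abs_le:
  assumes u: "\<And>j. j \<in> V \<Longrightarrow> \<bar>u j\<bar> \<le> K"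
  shows "i \<in> V \<Longrightarrow> \<bar>(B ^^ k) u i\<bar> \<le> c ^ k * K"
proof (induction k arbitrary: i)
  case 0
  then show ?case using u by simp
next
  case (Suc k)
  have "\<bar>B ((B ^^ k) u) i\<bar> \<le> c * (c ^ k * K)"
    by (rule B_abs_le) (use Suc in auto)
  then show ?case by simp
qed

lemma B_power_deviation:
  assumes N: "\<And>j. j \<in> V \<Longrightarrow> \<bar>M u j\<bar> \<le> N"
  shows "i \<in> V \<Longrightarrow> \<bar>c ^ k * u i - (B ^^ k) u i\<bar> \<le> real k * c ^ (k - 1) * N"
proof (induction k arbitrary: i)
  case 0
  then show ?case by simp
next
  case (Suc k)
  have split: "c ^ Suc k * u i - (B ^^ Suc k) u i = c ^ k * M u i + B (\<lambda>l. c ^ k * u l - (B ^^ k) u l) i"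
    by (simp add: B_diff) (simp add: B_def algebra_simps)
  have "\<bar>c ^ k * M u i\<bar> \<le> c ^ k * N"
    using N[OF Suc.prems] c_ge_1 by (simp add: abs_mult mult_left_mono)
  moreover have "\<bar>B (\<lambda>l. c ^ k * u l - (B ^^ k) u l) i\<bar> \<le> c * (real k * c ^ (k - 1) * N)"
    by (rule B_abs_le) (use Suc in auto)
  ultimately have "\<bar>c ^ Suc k * u i - (B ^^ Suc k) u i\<bar> \<le> c ^ k * N + c * (real k * c ^ (k - 1) * N)"
    unfolding split by linarith
  also have "\<dots> = real (Suc k) * c ^ (Suc k - 1) * N"
    by (cases k) (simp_all add: algebra_simps)
  finally show ?case .
qed

lemma B_series_summable_norm:
  assumes i: "i \<in> V"
  shows "summable (\<lambda>k. norm (\<tau> ^ k / fact k * (B ^^ k) u i))"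
proof -
  define K where "K = (\<Sum>j\<in>V. \<bar>u j\<bar>)"
  have "\<bar>u j\<bar> \<le> K" if "j \<in> V" for j
    unfolding K_def by (rule member_le_sum) (use that finite_V in auto)
  then have "\<bar>(B ^^ k) u i\<bar> \<le> c ^ k * K" for k
    using B_power_abs_le i by blast
  then have "\<bar>\<tau>\<bar> ^ k * \<bar>(B ^^ k) u i\<bar> \<le> \<bar>\<tau>\<bar> ^ k * (c ^ k * K)" for k
    by (simp add: mult_left_mono)
  then have "norm (norm (\<tau> ^ k / fact k * (B ^^ k) u i)) \<le> (c * \<bar>\<tau>\<bar>) ^ k / fact k * K" for k
    by (simp add: abs_mult power_abs power_mult_distrib divide_simps algebra_simps)
  moreover have "summable (\<lambda>k. (c * \<bar>\<tau>\<bar>) ^ k / fact k * K)"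
    by (rule sums_summable[OF sums_mult2[OF exp_sums]])
  ultimately show ?thesis
    by (rule summable_comparison_test'[rotated])
qed

lemma B_series_convolution:
  "(\<Sum>j\<le>k. \<tau> ^ j / fact j * (B ^^ j) u i * ((- c * \<tau>) ^ (k - j) / fact (k - j)))
     = (- \<tau>) ^ k / fact k * (M ^^ k) u i"
proof -
  have "(\<Sum>j\<le>k. \<tau> ^ j / fact j * (B ^^ j) u i * ((- c * \<tau>) ^ (k - j) / fact (k - j)))
      = (\<Sum>j\<le>k. \<tau> ^ k / fact k * (of_nat (k choose j) * (-c) ^ (k - j) * (B ^^ j) u i))"
  proof (rule sum.cong)
    fix j assume "j \<in> {..k}"
    then have jk: "j \<le> k" by simp
    have "(- c * \<tau>) ^ (k - j) = \<tau> ^ (k - j) * (-c) ^ (k - j)"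
      by (simp only: power_mult_distrib mult.commute)
    then have "\<tau> ^ j / fact j * (B ^^ j) u i * ((- c * \<tau>) ^ (k - j) / fact (k - j))
        = (\<tau> ^ j * \<tau> ^ (k - j)) * (-c) ^ (k - j) * (B ^^ j) u i / (fact j * fact (k - j))"
      by (simp add: field_simps)
    also have "\<dots> = \<tau> ^ k / fact k * (fact k / (fact j * fact (k - j)) * (-c) ^ (k - j) * (B ^^ j) u i)"
      using jk by (simp add: field_simps flip: power_add)
    finally show "\<tau> ^ j / fact j * (B ^^ j) u i * ((- c * \<tau>) ^ (k - j) / fact (k - j))
        = \<tau> ^ k / fact k * (of_nat (k choose j) * (-c) ^ (k - j) * (B ^^ j) u i)"
      by (simp add: binomial_fact[OF jk])
  qed simp
  also have "\<dots> = \<tau> ^ k / fact k * ((-1) ^ k * (M ^^ k) u i)"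
    by (simp add: sum_distrib_left fun_cong[OF neg_M_power_binomial])
  finally show ?thesis
    by (simp add: power_minus[of \<tau>])
qed

lemma M_series_eq_uniformized:
  assumes i: "i \<in> V"
  shows "(\<Sum>k. (- \<tau>) ^ k / fact k * (M ^^ k) u i)
           = (\<Sum>k. \<tau> ^ k / fact k * (B ^^ k) u i) * exp (- c * \<tau>)"
proof -
  have "summable (\<lambda>k. norm ((- c * \<tau>) ^ k / fact k))"
    using sums_summable[OF exp_sums[of "\<bar>c * \<tau>\<bar>"]] by (simp add: power_abs)
  from Cauchy_product[OF B_series_summable_norm[OF i] this]
  have "(\<Sum>k. \<tau> ^ k / fact k * (B ^^ k) u i) * (\<Sum>k. (- c * \<tau>) ^ k / fact k)
      = (\<Sum>k. (- \<tau>) ^ k / fact k * (M ^^ k) u i)"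
    by (simp only: B_series_convolution)
  then show ?thesis
    by (simp only: sums_unique[OF exp_sums, symmetric])
qed

lemma B_series_deviation:
  assumes N: "\<And>j. j \<in> V \<Longrightarrow> \<bar>M u j\<bar> \<le> N" and \<tau>: "\<tau> \<ge> 0" and i: "i \<in> V"
  shows "\<bar>exp (c * \<tau>) * u i - (\<Sum>k. \<tau> ^ k / fact k * (B ^^ k) u i)\<bar> \<le> \<tau> * exp (c * \<tau>) * N"
proof -
  define D where "D k = \<tau> ^ k / fact k * (real k * c ^ (k - 1)) * N" for k
  define E where "E k = \<tau> ^ k / fact k * (c ^ k * u i - (B ^^ k) u i)" for k
  have D_sums: "D sums (\<tau> * exp (c * \<tau>) * N)"
    unfolding D_def[abs_def] by (rule sums_mult2[OF exp_deriv_sums])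
  have E_le_D: "norm (E k) \<le> D k" for k
    using mult_left_mono[OF B_power_deviation[OF N i, of k], of "\<tau> ^ k / fact k"] \<tau>
    by (simp add: E_def D_def abs_mult)
  have E_summable: "summable (\<lambda>k. norm (E k))"
    by (rule summable_comparison_test'[OF sums_summable[OF D_sums], where N = 0]) (use E_le_D in simp)
  have "(\<lambda>k. (c * \<tau>) ^ k / fact k * u i - \<tau> ^ k / fact k * (B ^^ k) u i)
      sums (exp (c * \<tau>) * u i - (\<Sum>k. \<tau> ^ k / fact k * (B ^^ k) u i))"
    by (rule sums_diff[OF sums_mult2[OF exp_sums]
          summable_sums[OF summable_norm_cancel[OF B_series_summable_norm[OF i]]]])
  moreover have "(\<lambda>k. (c * \<tau>) ^ k / fact k * u i - \<tau> ^ k / fact k * (B ^^ k) u i) = E"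
    by (simp add: fun_eq_iff E_def power_mult_distrib algebra_simps)
  ultimately have "E sums (exp (c * \<tau>) * u i - (\<Sum>k. \<tau> ^ k / fact k * (B ^^ k) u i))"
    by simp
  then have "\<bar>exp (c * \<tau>) * u i - (\<Sum>k. \<tau> ^ k / fact k * (B ^^ k) u i)\<bar> = norm (suminf E)"
    by (simp add: sums_iff)
  also have "\<dots> \<le> (\<Sum>k. norm (E k))"
    by (rule summable_norm[OF E_summable])
  also have "\<dots> \<le> suminf D"
    by (rule suminf_le[OF E_le_D E_summable sums_summable[OF D_sums]])
  also have "\<dots> = \<tau> * exp (c * \<tau>) * N"
    using sums_unique[OF D_sums] by simp
  finally show ?thesis .
qed

lemma M_series_deviation:
  assumes N: "\<And>j. j \<in> V \<Longrightarrow> \<bar>M u j\<bar> \<le> N" and \<tau>: "\<tau> \<ge> 0" and i: "i \<in> V"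
  shows "\<bar>(\<Sum>k. (- \<tau>) ^ k / fact k * (M ^^ k) u i) - u i\<bar> \<le> \<tau> * N"
proof -
  have exp_inverse: "exp (- c * \<tau>) * exp (c * \<tau>) = 1"
    by (simp flip: exp_add)
  have "(\<Sum>k. (- \<tau>) ^ k / fact k * (M ^^ k) u i) - u i
      = exp (- c * \<tau>) * ((\<Sum>k. \<tau> ^ k / fact k * (B ^^ k) u i) - exp (c * \<tau>) * u i)"
    unfolding M_series_eq_uniformized[OF i] using exp_inverse by (simp add: algebra_simps)
  then have "\<bar>(\<Sum>k. (- \<tau>) ^ k / fact k * (M ^^ k) u i) - u i\<bar>
      = exp (- c * \<tau>) * \<bar>exp (c * \<tau>) * u i - (\<Sum>k. \<tau> ^ k / fact k * (B ^^ k) u i)\<bar>"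
    by (simp add: abs_mult abs_minus_commute)
  also have "\<dots> \<le> exp (- c * \<tau>) * (\<tau> * exp (c * \<tau>) * N)"
    by (rule mult_left_mono[OF B_series_deviation[OF N \<tau> i] exp_ge_zero])
  also have "\<dots> = \<tau> * N"
    using exp_inverse by (simp add: algebra_simps)
  finally show ?thesis .
qed

lemma funpow_eq_M_power:
  assumes "\<And>x j. j \<in> V \<Longrightarrow> A x j = M x j"
  shows "i \<in> V \<Longrightarrow> (A ^^ k) u i = (M ^^ k) u i"
proof (induction k arbitrary: i)
  case 0
  then show ?case by simp
next
  case (Suc k)
  then show ?case
    using assms by (simp add: M_def)
qed

end

section \<open>Graph Laplacian and the Dirichlet problem\<close>

locale weighted_graph =
  fixes n :: nat and w :: "nat \<Rightarrow> nat \<Rightarrow> real" and r :: real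
  assumes graph: "is_graph n w"
begin

abbreviation "V \<equiv> Vset n"
abbreviation "d \<equiv> deg n w"

lemma finite_V: "finite V"
  by (simp add: Vset_def)

lemma weight_sym: "i \<in> V \<Longrightarrow> j \<in> V \<Longrightarrow> w i j = w j i"
  using graph by (simp add: is_graph_def)

lemma weight_nonneg: "i \<in> V \<Longrightarrow> j \<in> V \<Longrightarrow> w i j \<ge> 0"
  using graph by (simp add: is_graph_def)

lemma connected: "i \<in> V \<Longrightarrow> j \<in> V \<Longrightarrow> (i, j) \<in> {(a, b). a \<in> V \<and> b \<in> V \<and> w a b > 0}\<^sup>*"
  using graph by (simp add: is_graph_def)

lemma V_nonempty: "V \<noteq> {}"
  using graph by (auto simp: is_graph_def Vset_def)

lemma exists_other_vertex:
  assumes "i \<in> V"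
  obtains j where "j \<in> V" "j \<noteq> i"
proof -
  have "1 \<in> V" "2 \<in> V"
    using graph by (auto simp: is_graph_def Vset_def)
  then show ?thesis
    using that by (cases "i = 1") auto
qed

lemma deg_pos:
  assumes i: "i \<in> V"
  shows "d i > 0"
proof -
  obtain j where "j \<in> V" "j \<noteq> i"
    using exists_other_vertex[OF i] .
  with connected[OF i this(1)] obtain k where k: "k \<in> V" "w i k > 0"
    by (auto elim: converse_rtranclE)
  have "w i k \<le> d i"
    unfolding deg_def by (rule member_le_sum) (use k weight_nonneg i finite_V in auto)
  with k show ?thesis
    by linarith
qed

lemma deg_powr_pos: "i \<in> V \<Longrightarrow> d i powr s > 0"
  using deg_pos[of i] by simp

lemma deg_powr_cancel: "i \<in> V \<Longrightarrow> d i powr r * d i powr (- r) = 1"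
  using deg_pos[of i] by (simp add: powr_minus)

lemma vol_pos: "vol n w r > 0"
  unfolding vol_def using finite_V V_nonempty deg_powr_pos by (simp add: sum_pos)

abbreviation "vl \<equiv> vol n w r"

lemma mass_Lap: "mass n w r (Lap n w r x) = 0"
proof -
  have "mass n w r (Lap n w r x) = (\<Sum>i\<in>V. \<Sum>j\<in>V. w i j * (x i - x j))"
    unfolding mass_def Lap_def
    by (rule sum.cong) (auto simp: deg_powr_cancel mult.assoc[symmetric])
  also have "\<dots> = (\<Sum>i\<in>V. \<Sum>j\<in>V. w i j * x i) - (\<Sum>i\<in>V. \<Sum>j\<in>V. w i j * x j)"
    by (simp add: algebra_simps sum_subtractf)
  also have "(\<Sum>i\<in>V. \<Sum>j\<in>V. w i j * x j) = (\<Sum>j\<in>V. \<Sum>i\<in>V. w i j * x j)"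
    by (rule sum.swap)
  also have "(\<Sum>j\<in>V. \<Sum>i\<in>V. w i j * x j) = (\<Sum>i\<in>V. \<Sum>j\<in>V. w i j * x i)"
    by (intro sum.cong refl) (simp add: weight_sym)
  finally show ?thesis
    by simp
qed

lemma Lap_linear: "Lap n w r (\<lambda>i. a * x i + b * y i) j = a * Lap n w r x j + b * Lap n w r y j"
proof -
  have "(\<Sum>k\<in>V. w j k * ((a * x j + b * y j) - (a * x k + b * y k)))
      = (\<Sum>k\<in>V. a * (w j k * (x j - x k)) + b * (w j k * (y j - y k)))"
    by (rule sum.cong) (auto simp: algebra_simps)
  also have "\<dots> = a * (\<Sum>k\<in>V. w j k * (x j - x k)) + b * (\<Sum>k\<in>V. w j k * (y j - y k))"
    by (simp add: sum.distrib sum_distrib_left)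
  finally show ?thesis
    by (simp add: Lap_def algebra_simps)
qed

lemma Lap_scale: "Lap n w r (\<lambda>i. a * x i) j = a * Lap n w r x j"
  using Lap_linear[of a x 0 x j] by simp

lemma Lap_diff: "Lap n w r (\<lambda>i. x i - y i) j = Lap n w r x j - Lap n w r y j"
  using Lap_linear[of 1 x "-1" y j] by simp

lemma Lap_diff_const: "Lap n w r (\<lambda>i. x i - a) j = Lap n w r x j"
  by (simp add: Lap_def)

definition lap_coeff :: "nat \<Rightarrow> nat \<Rightarrow> real" where
  "lap_coeff i j = d i powr (- r) * ((if i = j then d i else 0) - w i j)"

lemma Lap_eq_sum_lap_coeff:
  assumes i: "i \<in> V"
  shows "Lap n w r x i = (\<Sum>j\<in>V. lap_coeff i j * x j)"
proof -
  have "(\<Sum>j\<in>V. w i j * (x i - x j)) = d i * x i - (\<Sum>j\<in>V. w i j * x j)"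
    by (simp add: deg_def algebra_simps sum_subtractf sum_distrib_left)
  moreover have "(\<Sum>j\<in>V. lap_coeff i j * x j)
      = d i powr (- r) * ((\<Sum>j\<in>V. (if i = j then d i else 0) * x j) - (\<Sum>j\<in>V. w i j * x j))"
    by (simp add: lap_coeff_def sum_distrib_left algebra_simps sum_subtractf)
  moreover have "(\<Sum>j\<in>V. (if i = j then d i else 0) * x j) = d i * x i"
    using i finite_V by (simp add: if_distrib[of "\<lambda>a. a * x _"] cong: if_cong)
  ultimately show ?thesis
    by (simp add: Lap_def)
qed

lemma lap_coeff_row_sum: "i \<in> V \<Longrightarrow> (\<Sum>j\<in>V. lap_coeff i j) = 0"
  using Lap_eq_sum_lap_coeff[of i "\<lambda>_. 1"] by (simp add: Lap_def)

lemma exists_max: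
  obtains a where "a \<in> V" "\<And>k. k \<in> V \<Longrightarrow> (x k :: real) \<le> x a"
proof -
  have "Max (x ` V) \<in> x ` V"
    using finite_V V_nonempty by (intro Max_in) auto
  then obtain a where "a \<in> V" "x a = Max (x ` V)"
    by (metis imageE)
  then show ?thesis
    using that finite_V by simp
qed

lemma neighbour_of_max_eq:
  assumes i: "i \<in> V" and Lap: "Lap n w r x i \<le> 0" and max: "\<And>k. k \<in> V \<Longrightarrow> x k \<le> x i"
    and j: "j \<in> V" "w i j > 0"
  shows "x j = x i"
proof -
  have terms_nonneg: "\<forall>k\<in>V. w i k * (x i - x k) \<ge> 0"
    using weight_nonneg[OF i] max by simp
  moreover have "(\<Sum>k\<in>V. w i k * (x i - x k)) \<le> 0"
    using Lap deg_powr_pos[OF i, of "- r"] by (simp add: Lap_def mult_le_0_iff)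
  ultimately have "(\<Sum>k\<in>V. w i k * (x i - x k)) = 0"
    by (meson antisym sum_nonneg)
  then have "w i j * (x i - x j) = 0"
    using terms_nonneg j(1) finite_V by (simp add: sum_nonneg_eq_0_iff)
  then show ?thesis
    using j(2) by simp
qed

lemma max_propagates:
  assumes Lap: "\<And>i. i \<in> S \<Longrightarrow> Lap n w r x i \<le> 0"
    and a: "a \<in> V" and max: "\<And>k. k \<in> V \<Longrightarrow> x k \<le> x a" and b: "b \<in> V"
  shows "x b = x a \<or> (\<exists>y\<in>V - S. x y = x a)"
  using connected[OF a b]
proof (induction rule: rtrancl_induct)
  case base
  then show ?case by simp
next
  case (step b' b'')
  then have edge: "b' \<in> V" "b'' \<in> V" "w b' b'' > 0"
    by auto
  show ?case
  proof (cases "x b' = x a \<and> b' \<in> S")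
    case True
    then have "x b'' = x b'"
      using neighbour_of_max_eq[OF edge(1) Lap _ edge(2,3)] max by simp
    then show ?thesis
      using True by simp
  next
    case False
    then show ?thesis
      using step.IH edge by auto
  qed
qed

lemma dirichlet_nonpos:
  assumes S: "S \<subseteq> V" "S \<noteq> V" and Lap: "\<And>i. i \<in> S \<Longrightarrow> Lap n w r x i \<le> 0"
    and zero: "\<And>i. i \<notin> S \<Longrightarrow> x i = 0" and i: "i \<in> V"
  shows "x i \<le> 0"
proof -
  obtain a where a: "a \<in> V" "\<And>k. k \<in> V \<Longrightarrow> x k \<le> x a"
    using exists_max by blast
  obtain b where b: "b \<in> V" "b \<notin> S"
    using S by auto
  have "x a = 0"
    using max_propagates[of S x, OF Lap a b(1)] b zero by auto
  then show ?thesis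
    using a i by auto
qed

lemma dirichlet_unique:
  assumes S: "S \<subseteq> V" "S \<noteq> V" and Lap: "\<And>i. i \<in> S \<Longrightarrow> Lap n w r x i = 0"
    and zero: "\<And>i. i \<notin> S \<Longrightarrow> x i = 0"
  shows "x i = 0"
proof (cases "i \<in> V")
  case True
  have "x i \<le> 0"
    using dirichlet_nonpos[OF S, of x i] Lap zero True by simp
  moreover have "- x i \<le> 0"
    using dirichlet_nonpos[OF S, of "\<lambda>i. - x i" i] Lap zero True Lap_scale[of "-1" x] by simp
  ultimately show ?thesis
    by simp
next
  case False
  then show ?thesis
    using zero S by auto
qed

text \<open>Induction on \<open>S\<close>: adding a vertex \<open>k\<close>, correct a solution on the smaller set by a
  multiple of a function \<open>h\<close> that is harmonic there, vanishes outside, and has \<open>h k = 1\<close>;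
  uniqueness forces \<open>\<Delta> h k \<noteq> 0\<close>.\<close>

lemma dirichlet_solvable:
  assumes "S \<subseteq> V" "S \<noteq> V"
  shows "\<exists>\<nu>. (\<forall>i\<in>S. Lap n w r \<nu> i = f i) \<and> (\<forall>i. i \<notin> S \<longrightarrow> \<nu> i = 0)"
proof -
  have "finite S"
    using assms(1) finite_V finite_subset by blast
  then show ?thesis
    using assms
  proof (induction S arbitrary: f rule: finite_induct)
    case empty
    show ?case
      by (intro exI[of _ "\<lambda>_. 0"]) simp
  next
    case (insert k S)
    then have S: "S \<subseteq> V" "S \<noteq> V"
      by auto
    define e where "e i = (if i = k then 1 else 0 :: real)" for i
    obtain g where g: "\<forall>i\<in>S. Lap n w r g i = - Lap n w r e i" "\<forall>i. i \<notin> S \<longrightarrow> g i = 0"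
      using insert.IH[OF S, of "\<lambda>i. - Lap n w r e i"] by blast
    obtain a where a: "\<forall>i\<in>S. Lap n w r a i = f i" "\<forall>i. i \<notin> S \<longrightarrow> a i = 0"
      using insert.IH[OF S] by blast
    define h where "h i = 1 * e i + 1 * g i" for i
    have Lap_h: "Lap n w r h i = Lap n w r e i + Lap n w r g i" for i
      unfolding h_def[abs_def] Lap_linear by simp
    have h_zero: "\<forall>i. i \<notin> insert k S \<longrightarrow> h i = 0"
      using g(2) by (simp add: h_def e_def)
    have h_harmonic: "\<forall>i\<in>S. Lap n w r h i = 0"
      using Lap_h g(1) by simp
    have "Lap n w r h k \<noteq> 0"
    proof
      assume "Lap n w r h k = 0"
      then have "h k = 0"
        using dirichlet_unique[OF insert.prems, of h k] h_harmonic h_zero by auto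
      then show False
        using g(2) insert.hyps(2) by (simp add: h_def e_def)
    qed
    define \<nu> where "\<nu> i = a i + (f k - Lap n w r a k) / Lap n w r h k * h i" for i
    have "Lap n w r \<nu> i = Lap n w r a i + (f k - Lap n w r a k) / Lap n w r h k * Lap n w r h i" for i
      using Lap_linear[of 1 a "(f k - Lap n w r a k) / Lap n w r h k" h i] by (simp add: \<nu>_def[abs_def])
    then have "\<forall>i\<in>insert k S. Lap n w r \<nu> i = f i"
      using a(1) h_harmonic \<open>Lap n w r h k \<noteq> 0\<close> by simp
    moreover have "\<forall>i. i \<notin> insert k S \<longrightarrow> \<nu> i = 0"
      using a(2) h_zero by (simp add: \<nu>_def)
    ultimately show ?case
      by blast
  qed
qed

lemma eqmeas_spec:
  assumes S: "S \<subseteq> V" "S \<noteq> V"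
  shows "\<forall>i\<in>S. Lap n w r (eqmeas n w r S) i = 1" and "\<forall>i. i \<notin> S \<longrightarrow> eqmeas n w r S i = 0"
proof -
  let ?P = "\<lambda>\<nu>. (\<forall>i\<in>S. Lap n w r \<nu> i = 1) \<and> (\<forall>i. i \<notin> S \<longrightarrow> \<nu> i = 0)"
  obtain \<nu> where \<nu>: "?P \<nu>"
    using dirichlet_solvable[OF S, of "\<lambda>_. 1"] by blast
  have unique: "\<mu> = \<nu>" if "?P \<mu>" for \<mu>
  proof
    fix i
    have "(\<lambda>j. \<mu> j - \<nu> j) i = 0"
      by (rule dirichlet_unique[OF S]) (use that \<nu> in \<open>simp_all add: Lap_diff\<close>)
    then show "\<mu> i = \<nu> i"
      by simp
  qed
  have "?P (eqmeas n w r S)"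
    unfolding eqmeas_def by (rule theI[of ?P, OF \<nu> unique])
  then show "\<forall>i\<in>S. Lap n w r (eqmeas n w r S) i = 1" and "\<forall>i. i \<notin> S \<longrightarrow> eqmeas n w r S i = 0"
    by auto
qed

lemma mass_scale: "mass n w r (\<lambda>i. a * x i) = a * mass n w r x"
  by (simp add: mass_def sum_distrib_left algebra_simps)

section \<open>The operator \<open>L\<close> as a matrix\<close>

lemma mass_diff_const: "mass n w r (\<lambda>i. x i - a) = mass n w r x - a * vl"
  by (simp add: mass_def vol_def algebra_simps sum_subtractf sum_distrib_left)

lemma mass_centered: "mass n w r (\<lambda>i. x i - avg n w r x i) = 0"
  using mass_diff_const[of x "mass n w r x / vl"] vol_pos by (simp add: avg_def)

lemma Lap_eqmeas_at_removed_vertex: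
  assumes j: "j \<in> V"
  shows "Lap n w r (eqmeas n w r (V - {j})) j = 1 - vl / d j powr r"
proof -
  let ?\<nu> = "eqmeas n w r (V - {j})"
  have Lap_\<nu>: "\<forall>i\<in>V - {j}. Lap n w r ?\<nu> i = 1"
    by (rule eqmeas_spec) (use j in auto)
  have "0 = (\<Sum>i\<in>V. d i powr r * Lap n w r ?\<nu> i)"
    using mass_Lap[of ?\<nu>] by (simp add: mass_def)
  also have "\<dots> = d j powr r * Lap n w r ?\<nu> j + (\<Sum>i\<in>V - {j}. d i powr r * Lap n w r ?\<nu> i)"
    by (rule sum.remove[OF finite_V j])
  also have "(\<Sum>i\<in>V - {j}. d i powr r * Lap n w r ?\<nu> i) = vl - d j powr r"
    using Lap_\<nu> sum.remove[OF finite_V j, of "\<lambda>i. d i powr r"] by (simp add: vol_def)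
  finally show ?thesis
    using deg_powr_pos[OF j, of r] by (simp add: field_simps)
qed

text \<open>\<open>phi_basis j\<close> is \<open>\<phi>\<close> of the indicator of \<open>j\<close>; see \<open>phi_eq_phi_expand\<close>.\<close>

definition phi_basis :: "nat \<Rightarrow> nat \<Rightarrow> real" where
  "phi_basis j = (\<lambda>i. - (d j powr r / vl) * fj n w r j i)"

lemma Lap_phi_basis:
  assumes i: "i \<in> V" and j: "j \<in> V"
  shows "Lap n w r (phi_basis j) i = (if i = j then 1 else 0) - d j powr r / vl"
proof -
  let ?\<nu> = "eqmeas n w r (V - {j})"
  have "phi_basis j = (\<lambda>i. (- (d j powr r / vl)) * (?\<nu> i - mass n w r ?\<nu> / vl))"
    by (simp add: phi_basis_def fj_def avg_def)
  then have "Lap n w r (phi_basis j) i = - (d j powr r / vl) * Lap n w r ?\<nu> i"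
    by (simp only: Lap_scale Lap_diff_const)
  also have "\<dots> = (if i = j then 1 else 0) - d j powr r / vl"
    using eqmeas_spec(1)[of "V - {j}"] Lap_eqmeas_at_removed_vertex[OF j] deg_powr_pos[OF j, of r]
      vol_pos i j by (auto simp: field_simps)
  finally show ?thesis .
qed

lemma mass_phi_basis: "mass n w r (phi_basis j) = 0"
  unfolding phi_basis_def mass_scale by (simp add: fj_def mass_centered)

definition phi_expand :: "(nat \<Rightarrow> real) \<Rightarrow> nat \<Rightarrow> real" where
  "phi_expand u = (\<lambda>i. if i \<in> V then (\<Sum>j\<in>V. u j * phi_basis j i) else 0)"

lemma Lap_phi_expand:
  assumes i: "i \<in> V"
  shows "Lap n w r (phi_expand u) i = u i - avg n w r u i"
proof -
  have "Lap n w r (phi_expand u) i = (\<Sum>k\<in>V. \<Sum>j\<in>V. u j * (lap_coeff i k * phi_basis j k))"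
    using i by (simp add: Lap_eq_sum_lap_coeff phi_expand_def sum_distrib_left algebra_simps)
  also have "\<dots> = (\<Sum>j\<in>V. \<Sum>k\<in>V. u j * (lap_coeff i k * phi_basis j k))"
    by (rule sum.swap)
  also have "\<dots> = (\<Sum>j\<in>V. u j * Lap n w r (phi_basis j) i)"
    using i by (simp add: Lap_eq_sum_lap_coeff sum_distrib_left)
  also have "\<dots> = (\<Sum>j\<in>V. (if i = j then u j else 0) - d j powr r * u j / vl)"
    using i by (intro sum.cong) (auto simp: Lap_phi_basis algebra_simps)
  also have "\<dots> = u i - avg n w r u i"
    using i finite_V by (simp add: sum_subtractf avg_def mass_def flip: sum_divide_distrib)
  finally show ?thesis .
qed

lemma mass_phi_expand: "mass n w r (phi_expand u) = 0"
proof -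
  have "mass n w r (phi_expand u) = (\<Sum>i\<in>V. \<Sum>j\<in>V. u j * (d i powr r * phi_basis j i))"
    by (simp add: mass_def phi_expand_def sum_distrib_left algebra_simps)
  also have "\<dots> = (\<Sum>j\<in>V. u j * mass n w r (phi_basis j))"
    by (subst sum.swap) (simp add: mass_def sum_distrib_left)
  finally show ?thesis
    by (simp add: mass_phi_basis)
qed

lemma harmonic_mass_zero:
  assumes Lap: "\<And>i. i \<in> V \<Longrightarrow> Lap n w r x i = 0" and mass: "mass n w r x = 0"
    and zero: "\<And>i. i \<notin> V \<Longrightarrow> x i = 0"
  shows "x = (\<lambda>_. 0)"
proof -
  obtain a where a: "a \<in> V" "\<And>k. k \<in> V \<Longrightarrow> x k \<le> x a"
    using exists_max by blast
  have const: "x b = x a" if "b \<in> V" for b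
    using max_propagates[of V x, OF _ a that] Lap by auto
  have "mass n w r x = (\<Sum>i\<in>V. d i powr r * x a)"
    unfolding mass_def by (intro sum.cong refl) (metis const)
  also have "\<dots> = x a * vl"
    by (simp add: vol_def sum_distrib_left mult.commute)
  finally have "x a = 0"
    using mass vol_pos by simp
  then show ?thesis
    using const zero by (metis)
qed

lemma phi_eq_phi_expand: "phi n w r u = phi_expand u"
  unfolding phi_def
proof (rule the_equality)
  show "(\<forall>i\<in>V. Lap n w r (phi_expand u) i = u i - avg n w r u i) \<and> mass n w r (phi_expand u) = 0
      \<and> (\<forall>i. i \<notin> V \<longrightarrow> phi_expand u i = 0)"
    using Lap_phi_expand mass_phi_expand by (simp add: phi_expand_def)
next
  fix p
  assume p: "(\<forall>i\<in>V. Lap n w r p i = u i - avg n w r u i) \<and> mass n w r p = 0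
      \<and> (\<forall>i. i \<notin> V \<longrightarrow> p i = 0)"
  have "(\<lambda>i. p i - phi_expand u i) = (\<lambda>_. 0)"
  proof (rule harmonic_mass_zero)
    show "Lap n w r (\<lambda>i. p i - phi_expand u i) i = 0" if "i \<in> V" for i
      using p Lap_phi_expand[OF that, of u] that by (simp add: Lap_diff)
    show "mass n w r (\<lambda>i. p i - phi_expand u i) = 0"
      using p mass_phi_expand[of u] by (simp add: mass_def sum_subtractf algebra_simps)
    show "p i - phi_expand u i = 0" if "i \<notin> V" for i
      using p that by (simp add: phi_expand_def)
  qed
  then show "p = phi_expand u"
    by (simp add: fun_eq_iff)
qed

lemma phi_basis_column_sum:
  assumes i: "i \<in> V"
  shows "(\<Sum>j\<in>V. phi_basis j i) = 0"
proof -
  have "phi_expand (\<lambda>_. 1) = (\<lambda>_. 0)"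
  proof (rule harmonic_mass_zero)
    have "avg n w r (\<lambda>_. 1) = (\<lambda>_. 1)"
      using vol_pos by (simp add: avg_def mass_def vol_def)
    then show "Lap n w r (phi_expand (\<lambda>_. 1)) k = 0" if "k \<in> V" for k
      using Lap_phi_expand[OF that, of "\<lambda>_. 1"] by simp
    show "mass n w r (phi_expand (\<lambda>_. 1)) = 0"
      by (rule mass_phi_expand)
    show "phi_expand (\<lambda>_. 1) k = 0" if "k \<notin> V" for k
      using that by (simp add: phi_expand_def)
  qed
  then have "phi_expand (\<lambda>_. 1) i = 0"
    by simp
  then show ?thesis
    using i by (simp add: phi_expand_def)
qed

definition L_coeff :: "real \<Rightarrow> nat \<Rightarrow> nat \<Rightarrow> real" where
  "L_coeff \<gamma> i j = lap_coeff i j + \<gamma> * phi_basis j i"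

lemma Lop_eq_sum_L_coeff:
  assumes i: "i \<in> V"
  shows "Lop n w r \<gamma> x i = (\<Sum>j\<in>V. L_coeff \<gamma> i j * x j)"
  using i by (simp add: Lop_def Lap_eq_sum_lap_coeff phi_eq_phi_expand phi_expand_def L_coeff_def
      sum_distrib_left sum.distrib algebra_simps)

lemma L_coeff_row_sum: "i \<in> V \<Longrightarrow> (\<Sum>j\<in>V. L_coeff \<gamma> i j) = 0"
  using lap_coeff_row_sum phi_basis_column_sum
  by (simp add: L_coeff_def sum.distrib flip: sum_distrib_left)

lemma L_coeff_offdiag_nonpos:
  assumes C: "in_Cgamma n w r \<gamma>" and \<gamma>: "\<gamma> \<ge> 0"
    and i: "i \<in> V" and j: "j \<in> V" and ij: "i \<noteq> j"
  shows "L_coeff \<gamma> i j \<le> 0"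
proof -
  have L_coeff: "L_coeff \<gamma> i j = - (d i powr (- r) * w i j + \<gamma> * (d j powr r / vl) * fj n w r j i)"
    using ij by (simp add: L_coeff_def lap_coeff_def phi_basis_def algebra_simps)
  consider "\<gamma> = 0" | "w i j = 0" "\<gamma> > 0" | "w i j \<noteq> 0" "\<gamma> > 0"
    using \<gamma> by fastforce
  then show ?thesis
  proof cases
    case 1
    then show ?thesis
      using L_coeff deg_powr_pos[OF i] weight_nonneg[OF i j] by simp
  next
    case 2
    then have "in_C0 n w r"
      using C by (simp add: in_Cgamma_def)
    then have "w i j > 0 \<or> fj n w r j i \<ge> 0"
      using i j ij by (simp add: in_C0_def)
    then have "fj n w r j i \<ge> 0"
      using 2 by simp
    then show ?thesis
      using 2 L_coeff deg_powr_pos[OF j, of r] vol_pos by simp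
  next
    case 3
    with C have "\<forall>j\<in>V. \<forall>i\<in>V. i \<noteq> j \<longrightarrow> w i j = 0 \<or>
        d i powr (- r) * w i j + \<gamma> * (d j powr r / vl) * fj n w r j i > 0"
      unfolding in_Cgamma_def by auto
    then have "d i powr (- r) * w i j + \<gamma> * (d j powr r / vl) * fj n w r j i > 0"
      using i j ij 3(1) by blast
    then show ?thesis
      using L_coeff by simp
  qed
qed

lemma expL_deviation:
  assumes C: "in_Cgamma n w r \<gamma>" and \<gamma>: "\<gamma> \<ge> 0" and \<tau>: "\<tau> \<ge> 0"
    and N: "\<And>j. j \<in> V \<Longrightarrow> \<bar>Lop n w r \<gamma> u j\<bar> \<le> N" and i: "i \<in> V"
  shows "\<bar>expL n w r \<gamma> \<tau> u i - u i\<bar> \<le> \<tau> * N"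
proof -
  interpret Z_matrix_zero_rows V "L_coeff \<gamma>"
    by unfold_locales (use finite_V L_coeff_offdiag_nonpos[OF C \<gamma>] L_coeff_row_sum in auto)
  have Lop_eq_M: "Lop n w r \<gamma> x j = M x j" if "j \<in> V" for x j
    using that by (simp add: Lop_eq_sum_L_coeff M_def)
  have "\<bar>M u j\<bar> \<le> N" if "j \<in> V" for j
    using N[OF that] Lop_eq_M[OF that] by simp
  then show ?thesis
    using M_series_deviation[OF _ \<tau> i] funpow_eq_M_power[OF Lop_eq_M i]
    by (simp add: expL_def)
qed

end

lemma in_Cgamma_is_graph: "in_Cgamma n w r \<gamma> \<Longrightarrow> is_graph n w"
  by (auto simp: in_Cgamma_def in_C0_def split: if_splits)

lemma abs_le_supnorm: "i \<in> Vset n \<Longrightarrow> \<bar>u i\<bar> \<le> supnorm n u"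
  unfolding supnorm_def by (rule Max_ge) (auto simp: Vset_def)

lemma mult_supnorm_lt_half:
  assumes "0 \<le> \<tau>" "ereal \<tau> < tau_kappa n w r \<gamma> S" "supnorm n (Lop n w r \<gamma> (indicator S)) \<ge> 0"
  shows "\<tau> * supnorm n (Lop n w r \<gamma> (indicator S)) < 1/2"
  using assms by (cases "supnorm n (Lop n w r \<gamma> (indicator S)) = 0")
    (auto simp: tau_kappa_def field_simps)

lemma threshold_half_eq:
  assumes "S \<subseteq> A" and "\<And>i. i \<in> A \<Longrightarrow> \<bar>f i - indicator S i\<bar> < 1/2"
  shows "{i \<in> A. f i \<ge> (1::real) / 2} = S"
proof -
  have "f i \<ge> 1/2 \<longleftrightarrow> i \<in> S" if "i \<in> A" for i
    using assms(2)[OF that] by (cases "i \<in> S") (auto simp: abs_if split: if_splits)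
  then show ?thesis
    using assms(1) by auto
qed

theorem lemma6p30:
  fixes n :: nat and w :: "nat \<Rightarrow> nat \<Rightarrow> real" and r \<gamma> \<tau> :: real and S :: "nat set"
  assumes "0 \<le> r" "r \<le> 1"
    and "\<gamma> \<ge> 0"
    and "in_Cgamma n w r \<gamma>"
    and "S \<subseteq> Vset n" "S \<noteq> {}"
    and "0 \<le> \<tau>" "ereal \<tau> < tau_kappa n w r \<gamma> S"
  shows "okmbo_step n w r \<gamma> \<tau> S = S"
proof -
  interpret weighted_graph n w r
    using in_Cgamma_is_graph[OF assms(4)] by unfold_locales
  let ?N = "supnorm n (Lop n w r \<gamma> (indicator S))"
  have "?N \<ge> 0"
    using abs_le_supnorm[of _ n] V_nonempty by (meson abs_ge_zero ex_in_conv order_trans)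
  then have "\<tau> * ?N < 1/2"
    using mult_supnorm_lt_half assms(7,8) by blast
  moreover have "\<bar>expL n w r \<gamma> \<tau> (indicator S) i - indicator S i\<bar> \<le> \<tau> * ?N" if "i \<in> V" for i
    using expL_deviation[OF assms(4,3,7) abs_le_supnorm that] .
  ultimately show ?thesis
    unfolding okmbo_step_def by (intro threshold_half_eq assms(5)) fastforce
qed

end
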